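(* Let $q=q_n$ be the transpose top with random measure on $S_n$, $u=u_n$ the uniform measure on $S_n$, and $h_t=h_{q,t}$ the associated continuous time law. For any sequence of nonnegative reals $(k_n)$ such that $(k_n-n\log n)/n\to-\infty$ as $n\to\infty$, we have $d_2(h_{k_n},u)\to\infty$ and $\|h_{k_n}-u\|_{TV}\to 1$.
   Context: The transpose top with random measure on $S_n$ is $q(\tau)=1/n$ if $\tau=(1,j)$, $1\le j\le n$ (with $(1,1)=e$), and $0$ otherwise. $q^{(k)}$ is the $k$-fold convolution power and $h_{q,t}=e^{-t}\sum_{k\ge0}\frac{t^k}{k!}q^{(k)}$. $d_2(p,u)=\big(|G|\sum_{x\in G}|p(x)-u(x)|^2\big)^{1/2}$ and $\|p-u\|_{TV}=\sup_{A\subset G}(p(A)-u(A))$. *)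

theory Defs
  imports "HOL-Analysis.Analysis" "HOL-Combinatorics.Combinatorics"
begin

definition Sym :: "nat \<Rightarrow> (nat \<Rightarrow> nat) set" where
  "Sym n = {p. p permutes {1..n}}"

definition ttr :: "nat \<Rightarrow> (nat \<Rightarrow> nat) \<Rightarrow> real" where
  "ttr n \<tau> = (if \<exists>j\<in>{1..n}. \<tau> = Transposition.transpose 1 j then 1 / real n else 0)"

definition unif :: "nat \<Rightarrow> (nat \<Rightarrow> nat) \<Rightarrow> real" where
  "unif n x = (if x \<in> Sym n then 1 / real (card (Sym n)) else 0)"

definition conv :: "nat \<Rightarrow> ((nat \<Rightarrow> nat) \<Rightarrow> real) \<Rightarrow> ((nat \<Rightarrow> nat) \<Rightarrow> real) \<Rightarrow> (nat \<Rightarrow> nat) \<Rightarrow> real" where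
  "conv n p r x = (\<Sum>y\<in>Sym n. p y * r (inv y \<circ> x))"

fun conv_pow :: "nat \<Rightarrow> ((nat \<Rightarrow> nat) \<Rightarrow> real) \<Rightarrow> nat \<Rightarrow> (nat \<Rightarrow> nat) \<Rightarrow> real" where
  "conv_pow n p 0 = (\<lambda>x. if x = id then 1 else 0)"
| "conv_pow n p (Suc k) = conv n (conv_pow n p k) p"

definition heat :: "nat \<Rightarrow> ((nat \<Rightarrow> nat) \<Rightarrow> real) \<Rightarrow> real \<Rightarrow> (nat \<Rightarrow> nat) \<Rightarrow> real" where
  "heat n p t x = exp (- t) * (\<Sum>k. t ^ k / fact k * conv_pow n p k x)"

definition d2 :: "nat \<Rightarrow> ((nat \<Rightarrow> nat) \<Rightarrow> real) \<Rightarrow> ((nat \<Rightarrow> nat) \<Rightarrow> real) \<Rightarrow> real" where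
  "d2 n p u = sqrt (real (card (Sym n)) * (\<Sum>x\<in>Sym n. \<bar>p x - u x\<bar> ^ 2))"

definition tv :: "nat \<Rightarrow> ((nat \<Rightarrow> nat) \<Rightarrow> real) \<Rightarrow> ((nat \<Rightarrow> nat) \<Rightarrow> real) \<Rightarrow> real" where
  "tv n p u = (SUP A\<in>Pow (Sym n). (\<Sum>x\<in>A. p x) - (\<Sum>x\<in>A. u x))"

end

theory Submission
  imports Defs
begin

text \<open>
  A run of k steps is a uniformly random word j_1 ... j_k over {1..n}, and the walk is at the
  product (1 j_1) o ... o (1 j_k); the continuous-time law h_t mixes these laws over a
  Poisson(t) number of steps.  A point j /= 1 that never occurs in the word stays fixed.  With
  Poisson(t) many letters, the number U of unvisited points of {2..n} has mean
  mu = (n-1) exp(-t/n) and second moment at most mu + mu^2, so by Chebyshev h_t gives mass at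
  least 1 - 4/mu to the event A = {at least mu/2 fixed points in {2..n}}, whereas by Markov the
  uniform law gives A mass at most 2/mu.  Hence tv >= 1 - 6/mu and, by Cauchy-Schwarz,
  d2 >= sqrt(mu/8); below the cutoff mu tends to infinity.
\<close>

(* The Poisson mixture of a sequence: the mean of a_K for a Poisson(t)-distributed K.
   The continuous-time law h_t is by definition the Poisson mixture of the powers q^(k). *)
definition poisson_mix :: "real \<Rightarrow> (nat \<Rightarrow> real) \<Rightarrow> real" where
  "poisson_mix t a = exp (- t) * (\<Sum>k. t ^ k / fact k * a k)"

lemma exp_series_sums: "(\<lambda>k. x ^ k / fact k) sums exp (x :: real)"
  using exp_converges[of x] by (simp add: divide_inverse mult.commute)

lemma poisson_summable:
  fixes a :: "nat \<Rightarrow> real"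
  assumes "Bseq a"
  shows "summable (\<lambda>k. t ^ k / fact k * a k)"
proof -
  obtain K where K: "\<And>k. \<bar>a k\<bar> \<le> K" using assms by (auto simp: Bseq_def)
  show ?thesis
  proof (rule summable_comparison_test')
    show "summable (\<lambda>k. \<bar>t\<bar> ^ k / fact k * K)"
      using exp_series_sums[of "\<bar>t\<bar>"] by (intro summable_mult2 sums_summable)
    show "norm (t ^ k / fact k * a k) \<le> \<bar>t\<bar> ^ k / fact k * K" for k
      using K[of k] by (simp add: abs_mult power_abs divide_right_mono mult_left_mono)
  qed
qed

lemma poisson_mix_lincomb:
  assumes "Bseq a" "Bseq b"
  shows "poisson_mix t (\<lambda>k. \<alpha> + \<beta> * a k + \<gamma> * b k)
       = \<alpha> + \<beta> * poisson_mix t a + \<gamma> * poisson_mix t b"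
proof -
  let ?w = "\<lambda>k. t ^ k / fact k"
  have "(\<lambda>k. ?w k * \<alpha> + \<beta> * (?w k * a k) + \<gamma> * (?w k * b k))
          sums (exp t * \<alpha> + \<beta> * (\<Sum>k. ?w k * a k) + \<gamma> * (\<Sum>k. ?w k * b k))"
    using assms by (intro sums_add sums_mult sums_mult2 exp_series_sums summable_sums poisson_summable)
  then have "(\<Sum>k. ?w k * (\<alpha> + \<beta> * a k + \<gamma> * b k))
           = exp t * \<alpha> + \<beta> * (\<Sum>k. ?w k * a k) + \<gamma> * (\<Sum>k. ?w k * b k)"
    by (simp add: sums_iff algebra_simps)
  then show ?thesis
    by (simp add: poisson_mix_def algebra_simps exp_minus_inverse)
qed

lemma poisson_mix_geometric: "poisson_mix t (\<lambda>k. r ^ k) = exp (t * (r - 1))"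
proof -
  have "(\<lambda>k. t ^ k / fact k * r ^ k) sums exp (t * r)"
    using exp_series_sums[of "t * r"] by (simp add: power_mult_distrib)
  then show ?thesis
    by (simp add: poisson_mix_def sums_iff exp_add[symmetric] algebra_simps)
qed

lemma poisson_mix_const: "poisson_mix t (\<lambda>_. c) = c"
  using sums_mult2[OF exp_series_sums[of t], of c]
  by (simp add: poisson_mix_def sums_iff mult.assoc[symmetric] exp_add[symmetric])

lemma poisson_mix_mono:
  assumes "0 \<le> t" "Bseq a" "Bseq b" "\<And>k. a k \<le> b k"
  shows "poisson_mix t a \<le> poisson_mix t b"
  unfolding poisson_mix_def
  using assms by (intro mult_left_mono suminf_le poisson_summable) auto

lemma poisson_mix_sum:
  assumes "finite I" "\<And>i. i \<in> I \<Longrightarrow> Bseq (a i)"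
  shows "poisson_mix t (\<lambda>k. \<Sum>i\<in>I. a i k) = (\<Sum>i\<in>I. poisson_mix t (a i))"
proof -
  have "(\<Sum>k. \<Sum>i\<in>I. t ^ k / fact k * a i k) = (\<Sum>i\<in>I. \<Sum>k. t ^ k / fact k * a i k)"
    using assms by (intro suminf_sum poisson_summable)
  then show ?thesis
    by (simp add: poisson_mix_def sum_distrib_left)
qed

abbreviation tau :: "nat \<Rightarrow> nat \<Rightarrow> nat" where
  "tau j \<equiv> Transposition.transpose 1 j"

(* A word j_1 ... j_k over {1..n} encodes the k steps of the walk; its product is
   (1 j_1) o ... o (1 j_k). *)
definition word_prod :: "nat list \<Rightarrow> nat \<Rightarrow> nat" where
  "word_prod js = foldl (\<lambda>\<sigma> j. \<sigma> \<circ> tau j) id js"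

definition words :: "nat \<Rightarrow> nat \<Rightarrow> nat list set" where
  "words n k = {js. set js \<subseteq> {1..n} \<and> length js = k}"

definition word_mean :: "nat \<Rightarrow> nat \<Rightarrow> (nat list \<Rightarrow> real) \<Rightarrow> real" where
  "word_mean n k F = (\<Sum>js\<in>words n k. F js) / real n ^ k"

lemma word_prod_Nil [simp]: "word_prod [] = id"
  by (simp add: word_prod_def)

lemma word_prod_snoc [simp]: "word_prod (js @ [j]) = word_prod js \<circ> tau j"
  by (simp add: word_prod_def)

lemma finite_Sym [simp]: "finite (Sym n)"
  by (simp add: Sym_def finite_permutations)

lemma word_prod_in_Sym:
  assumes "set js \<subseteq> {1..n}"
  shows "word_prod js \<in> Sym n"
  using assms
proof (induction js rule: rev_induct)
  case (snoc j js)
  then have "word_prod js permutes {1..n}" "tau j permutes {1..n}"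
    by (auto simp: Sym_def intro: permutes_swap_id)
  then have "word_prod js \<circ> tau j permutes {1..n}"
    by (intro permutes_compose)
  then show ?case by (simp only: Sym_def mem_Collect_eq word_prod_snoc)
qed (simp add: Sym_def permutes_id)

(* A point j /= 1 that never occurs in the word is fixed by its product: this is
   the source of the many fixed points before mixing. *)
lemma word_prod_fixes_unvisited: "j \<notin> set js \<Longrightarrow> j \<noteq> 1 \<Longrightarrow> word_prod js j = j"
  by (induction js rule: rev_induct) (auto simp: transpose_def)

lemma finite_words [simp]: "finite (words n k)"
  unfolding words_def by (rule finite_lists_length_eq) auto

lemma card_words: "card (words n k) = n ^ k"
  unfolding words_def by (simp add: card_lists_length_eq)

lemma sum_words_Suc:
  "(\<Sum>js\<in>words n (Suc k). F js) = (\<Sum>js\<in>words n k. \<Sum>j\<in>{1..n}. F (js @ [j]))"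
proof -
  have "words n (Suc k) = (\<lambda>(js, j). js @ [j]) ` (words n k \<times> {1..n})"
    by (auto simp: words_def image_iff length_Suc_conv_rev)
  moreover have "inj_on (\<lambda>(js, j). js @ [j]) (words n k \<times> {1..n})"
    by (auto simp: inj_on_def)
  ultimately show ?thesis
    by (simp add: sum.reindex sum.cartesian_product case_prod_unfold)
qed

lemma word_mean_Suc:
  "word_mean n (Suc k) F = word_mean n k (\<lambda>js. (\<Sum>j\<in>{1..n}. F (js @ [j])) / real n)"
  by (simp add: word_mean_def sum_words_Suc sum_divide_distrib[symmetric])

lemma word_mean_const:
  assumes "1 \<le> n" shows "word_mean n k (\<lambda>_. c) = c"
  using assms by (simp add: word_mean_def card_words)

lemma word_mean_mono:
  "(\<And>js. set js \<subseteq> {1..n} \<Longrightarrow> F js \<le> G js) \<Longrightarrow> word_mean n k F \<le> word_mean n k G"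
  unfolding word_mean_def by (intro divide_right_mono sum_mono) (auto simp: words_def)

lemma word_mean_sum:
  "word_mean n k (\<lambda>js. \<Sum>i\<in>I. F i js) = (\<Sum>i\<in>I. word_mean n k (F i))"
  unfolding word_mean_def by (subst sum.swap) (simp add: sum_divide_distrib)

lemma word_mean_Bseq:
  assumes "1 \<le> n" "\<And>js. \<bar>F js\<bar> \<le> B"
  shows "Bseq (\<lambda>k. word_mean n k F)"
proof (rule BseqI')
  fix k
  have "\<bar>\<Sum>js\<in>words n k. F js\<bar> \<le> (\<Sum>js\<in>words n k. B)"
    using assms(2) by (intro order_trans[OF sum_abs] sum_mono)
  then show "norm (word_mean n k F) \<le> B"
    using assms(1) by (simp add: word_mean_def card_words abs_divide divide_le_eq mult.commute)
qed

lemma word_mean_avoid: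
  assumes "S \<subseteq> {1..n}"
  shows "word_mean n k (\<lambda>js. of_bool (set js \<inter> S = {})) = (real (n - card S) / real n) ^ k"
proof -
  have "words n k \<inter> {js. set js \<inter> S = {}} = {js. set js \<subseteq> {1..n} - S \<and> length js = k}"
    by (auto simp: words_def)
  moreover have "card ({1..n} - S) = n - card S"
    using assms by (simp add: card_Diff_subset finite_subset)
  ultimately have "card (words n k \<inter> {js. set js \<inter> S = {}}) = (n - card S) ^ k"
    by (simp add: card_lists_length_eq)
  then show ?thesis
    by (simp add: word_mean_def power_divide)
qed

lemma word_mean_cong:
  "(\<And>js. js \<in> words n k \<Longrightarrow> F js = G js) \<Longrightarrow> word_mean n k F = word_mean n k G"
  unfolding word_mean_def by (metis (mono_tags, lifting) sum.cong)

lemma word_mean_lincomb: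
  assumes "1 \<le> n"
  shows "word_mean n k (\<lambda>js. \<alpha> + \<beta> * F js + \<gamma> * G js)
       = \<alpha> + \<beta> * word_mean n k F + \<gamma> * word_mean n k G"
  using assms
  by (simp add: word_mean_def sum.distrib sum_distrib_left card_words add_divide_distrib)

lemma word_mean_pushforward:
  "(\<Sum>y\<in>Sym n. word_mean n k (\<lambda>js. of_bool (word_prod js = y)) * f y)
     = word_mean n k (\<lambda>js. f (word_prod js))"
proof -
  have inner: "(\<Sum>y\<in>Sym n. of_bool (word_prod js = y) * f y) = f (word_prod js)"
    if "js \<in> words n k" for js
  proof -
    have "(\<Sum>y\<in>Sym n. of_bool (word_prod js = y) * f y)
        = (\<Sum>y\<in>Sym n. if y = word_prod js then f y else 0)"
      by (rule sum.cong) auto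
    then show ?thesis using word_prod_in_Sym that by (simp add: sum.delta words_def)
  qed
  have "(\<Sum>y\<in>Sym n. word_mean n k (\<lambda>js. of_bool (word_prod js = y)) * f y)
      = (\<Sum>js\<in>words n k. \<Sum>y\<in>Sym n. of_bool (word_prod js = y) * f y) / real n ^ k"
    unfolding word_mean_def sum_divide_distrib sum_distrib_right
    by (subst sum.swap) (simp add: algebra_simps)
  also have "\<dots> = word_mean n k (\<lambda>js. f (word_prod js))"
    unfolding word_mean_def
    by (rule arg_cong[where f = "\<lambda>s. s / real n ^ k"], rule sum.cong[OF refl inner])
  finally show ?thesis .
qed

(* Distinct letters give distinct transpositions (1 j). *)
lemma sum_transpositions_indicator:
  "(\<Sum>j\<in>{1..n}. of_bool (tau j = y) :: real) = of_bool (\<exists>j\<in>{1..n}. y = tau j)"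
proof (cases "\<exists>j\<in>{1..n}. y = tau j")
  case True
  then obtain j0 where "j0 \<in> {1..n}" "y = tau j0" by blast
  moreover have "tau j = tau j0 \<longleftrightarrow> j = j0" for j
    by (metis transpose_apply_first)
  ultimately have "{1..n} \<inter> {j. tau j = y} = {j0}" by auto
  then show ?thesis using True by simp
next
  case False
  then have "{1..n} \<inter> {j. tau j = y} = {}" by auto
  then show ?thesis using False by simp
qed

lemma ttr_inv_comp:
  assumes "\<sigma> \<in> Sym n"
  shows "ttr n (inv \<sigma> \<circ> x) = (\<Sum>j\<in>{1..n}. of_bool (\<sigma> \<circ> tau j = x)) / real n"
proof -
  have perm: "\<sigma> permutes {1..n}" using assms by (simp add: Sym_def)
  have "\<sigma> \<circ> tau j = x \<longleftrightarrow> tau j = inv \<sigma> \<circ> x" for j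
    by (metis (no_types, lifting) comp_assoc comp_id id_comp permutes_inv_o[OF perm])
  then have "(\<Sum>j\<in>{1..n}. of_bool (\<sigma> \<circ> tau j = x) :: real)
           = (\<Sum>j\<in>{1..n}. of_bool (tau j = inv \<sigma> \<circ> x))"
    by (simp only:)
  also have "\<dots> = of_bool (\<exists>j\<in>{1..n}. inv \<sigma> \<circ> x = tau j)"
    by (rule sum_transpositions_indicator)
  finally show ?thesis by (simp add: ttr_def)
qed

lemma conv_pow_ttr:
  assumes "1 \<le> n"
  shows "conv_pow n (ttr n) k x = word_mean n k (\<lambda>js. of_bool (word_prod js = x))"
proof (induction k arbitrary: x)
  case 0
  have "words n 0 = {[]}" by (auto simp: words_def)
  then show ?case by (auto simp: word_mean_def)
next
  case (Suc k)
  have "conv_pow n (ttr n) (Suc k) x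
      = (\<Sum>y\<in>Sym n. word_mean n k (\<lambda>js. of_bool (word_prod js = y)) * ttr n (inv y \<circ> x))"
    by (simp add: conv_def Suc)
  also have "\<dots> = word_mean n k (\<lambda>js. ttr n (inv (word_prod js) \<circ> x))"
    by (rule word_mean_pushforward)
  also have "\<dots> = word_mean n k (\<lambda>js. (\<Sum>j\<in>{1..n}. of_bool (word_prod (js @ [j]) = x)) / real n)"
    by (intro word_mean_cong) (simp add: ttr_inv_comp word_prod_in_Sym words_def)
  also have "\<dots> = word_mean n (Suc k) (\<lambda>js. of_bool (word_prod js = x))"
    by (simp add: word_mean_Suc)
  finally show ?case .
qed

definition word_exp :: "nat \<Rightarrow> real \<Rightarrow> (nat list \<Rightarrow> real) \<Rightarrow> real" where
  "word_exp n t F = poisson_mix t (\<lambda>k. word_mean n k F)"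

lemma heat_mass:
  assumes "1 \<le> n" "finite A"
  shows "(\<Sum>x\<in>A. heat n (ttr n) t x) = word_exp n t (\<lambda>js. of_bool (word_prod js \<in> A))"
proof -
  have "(\<Sum>x\<in>A. heat n (ttr n) t x)
      = (\<Sum>x\<in>A. poisson_mix t (\<lambda>k. word_mean n k (\<lambda>js. of_bool (word_prod js = x))))"
    by (simp add: heat_def poisson_mix_def conv_pow_ttr[OF assms(1)])
  also have "\<dots> = poisson_mix t (\<lambda>k. \<Sum>x\<in>A. word_mean n k (\<lambda>js. of_bool (word_prod js = x)))"
    using assms by (intro poisson_mix_sum[symmetric] word_mean_Bseq[where B = 1]) auto
  also have "\<dots> = word_exp n t (\<lambda>js. of_bool (word_prod js \<in> A))"
  proof -
    have "A \<inter> {x. y = x} = (if y \<in> A then {y} else {})" for y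
      by auto
    then have "(\<Sum>x\<in>A. of_bool (y = x) :: real) = of_bool (y \<in> A)" for y
      using assms(2) by simp
    then show ?thesis by (simp add: word_exp_def word_mean_sum[symmetric])
  qed
  finally show ?thesis .
qed

lemma word_exp_mono:
  assumes "0 \<le> t" "1 \<le> n" "\<And>js. \<bar>F js\<bar> \<le> B" "\<And>js. \<bar>G js\<bar> \<le> C"
    and "\<And>js. set js \<subseteq> {1..n} \<Longrightarrow> F js \<le> G js"
  shows "word_exp n t F \<le> word_exp n t G"
  unfolding word_exp_def
  using assms by (intro poisson_mix_mono word_mean_Bseq word_mean_mono) auto

lemma word_exp_const: "1 \<le> n \<Longrightarrow> word_exp n t (\<lambda>_. c) = c"
  by (simp add: word_exp_def word_mean_const poisson_mix_const)

lemma word_exp_lincomb: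
  assumes "1 \<le> n" "\<And>js. \<bar>F js\<bar> \<le> B" "\<And>js. \<bar>G js\<bar> \<le> C"
  shows "word_exp n t (\<lambda>js. \<alpha> + \<beta> * F js + \<gamma> * G js)
       = \<alpha> + \<beta> * word_exp n t F + \<gamma> * word_exp n t G"
  unfolding word_exp_def word_mean_lincomb[OF assms(1)]
  using assms by (intro poisson_mix_lincomb word_mean_Bseq)

lemma word_exp_sum:
  assumes "finite I" "1 \<le> n" "\<And>i js. i \<in> I \<Longrightarrow> \<bar>F i js\<bar> \<le> B"
  shows "word_exp n t (\<lambda>js. \<Sum>i\<in>I. F i js) = (\<Sum>i\<in>I. word_exp n t (F i))"
  unfolding word_exp_def word_mean_sum
  using assms by (intro poisson_mix_sum word_mean_Bseq) auto

lemma word_exp_avoid: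
  assumes "1 \<le> n" "S \<subseteq> {1..n}"
  shows "word_exp n t (\<lambda>js. of_bool (set js \<inter> S = {})) = exp (- t * real (card S) / real n)"
proof -
  have "card S \<le> n" using card_mono[OF _ assms(2)] by simp
  then have "t * (real (n - card S) / real n - 1) = - t * real (card S) / real n"
    using assms(1) by (simp add: of_nat_diff field_simps)
  then show ?thesis
    using assms by (simp add: word_exp_def word_mean_avoid poisson_mix_geometric)
qed

(* The pointwise inequality behind Chebyshev's bound: the indicator of x >= mu/2
   dominates the quadratic 1 - 4 (x - mu)^2 / mu^2. *)
lemma indicator_ge_quadratic:
  fixes x \<mu> :: real
  assumes "0 < \<mu>"
  shows "1 - 4 / \<mu>\<^sup>2 * (x - \<mu>)\<^sup>2 \<le> of_bool (\<mu> / 2 \<le> x)"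
proof (cases "\<mu> / 2 \<le> x")
  case False
  then have "(\<mu> / 2)\<^sup>2 \<le> (x - \<mu>)\<^sup>2"
    using assms by (simp add: power2_commute[of x] power_mono)
  then have "4 / \<mu>\<^sup>2 * (\<mu> / 2)\<^sup>2 \<le> 4 / \<mu>\<^sup>2 * (x - \<mu>)\<^sup>2"
    by (rule mult_left_mono) simp
  moreover have "4 / \<mu>\<^sup>2 * (\<mu> / 2)\<^sup>2 = 1"
    using assms by (simp add: power_divide)
  ultimately show ?thesis using False by simp
qed simp

lemma word_exp_chebyshev:
  assumes "0 \<le> t" "1 \<le> n" "\<And>js. \<bar>F js\<bar> \<le> B" "0 < \<mu>"
    and mean: "word_exp n t F = \<mu>"
    and second_moment: "word_exp n t (\<lambda>js. F js ^ 2) \<le> \<mu> + \<mu>\<^sup>2"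
  shows "1 - 4 / \<mu> \<le> word_exp n t (\<lambda>js. of_bool (\<mu> / 2 \<le> F js))"
proof -
  define c where "c = 4 / \<mu>\<^sup>2"
  have c: "0 < c" "c * \<mu>\<^sup>2 = 4" "c * \<mu> = 4 / \<mu>"
    using \<open>0 < \<mu>\<close> by (auto simp: c_def power2_eq_square)
  define L where "L js = (1 - c * \<mu>\<^sup>2) + (- c) * F js ^ 2 + (2 * c * \<mu>) * F js" for js
  have L_eq: "L js = 1 - c * (F js - \<mu>)\<^sup>2" for js
    by (simp add: L_def power2_diff algebra_simps)
  have L_le_indicator: "L js \<le> of_bool (\<mu> / 2 \<le> F js)" for js
    unfolding L_eq c_def using indicator_ge_quadratic[OF \<open>0 < \<mu>\<close>] .
  have B: "0 \<le> B" using assms(3) by (meson abs_ge_zero order_trans)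
  have F_sq_bound: "\<bar>F js ^ 2\<bar> \<le> B\<^sup>2" for js
    using assms(3)[of js] B by (simp add: abs_le_square_iff[symmetric])
  have L_bound: "\<bar>L js\<bar> \<le> 1 + c * (B + \<mu>)\<^sup>2" for js
  proof -
    have "\<bar>F js - \<mu>\<bar> \<le> \<bar>B + \<mu>\<bar>"
      using assms(3)[of js] \<open>0 < \<mu>\<close> B by linarith
    then have "(F js - \<mu>)\<^sup>2 \<le> (B + \<mu>)\<^sup>2"
      by (simp add: abs_le_square_iff)
    then have "0 \<le> c * (F js - \<mu>)\<^sup>2" "c * (F js - \<mu>)\<^sup>2 \<le> c * (B + \<mu>)\<^sup>2"
      using c by (simp_all add: mult_left_mono)
    then show ?thesis unfolding L_eq by linarith
  qed
  have "1 - 4 / \<mu> = (1 - c * \<mu>\<^sup>2) + (- c) * (\<mu> + \<mu>\<^sup>2) + (2 * c * \<mu>) * \<mu>"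
    using c by (simp add: algebra_simps power2_eq_square)
  also have "\<dots> \<le> (1 - c * \<mu>\<^sup>2) + (- c) * word_exp n t (\<lambda>js. F js ^ 2) + (2 * c * \<mu>) * word_exp n t F"
    using second_moment mean c by simp
  also have "\<dots> = word_exp n t L"
    unfolding L_def using assms(2,3) F_sq_bound by (intro word_exp_lincomb[symmetric])
  also have "\<dots> \<le> word_exp n t (\<lambda>js. of_bool (\<mu> / 2 \<le> F js))"
    using assms(1,2) L_bound L_le_indicator by (intro word_exp_mono[where C = 1]) auto
  finally show ?thesis .
qed

definition unvisited :: "nat \<Rightarrow> nat list \<Rightarrow> real" where
  "unvisited n js = (\<Sum>j\<in>{2..n}. of_bool (set js \<inter> {j} = {}))"

definition fixed_points :: "nat \<Rightarrow> (nat \<Rightarrow> nat) \<Rightarrow> real" where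
  "fixed_points n \<sigma> = (\<Sum>j\<in>{2..n}. of_bool (\<sigma> j = j))"

lemma unvisited_le_fixed_points: "unvisited n js \<le> fixed_points n (word_prod js)"
  unfolding unvisited_def fixed_points_def
  by (intro sum_mono) (auto simp: word_prod_fixes_unvisited)

lemma unvisited_bound: "\<bar>unvisited n js\<bar> \<le> n"
proof -
  have "unvisited n js \<le> (\<Sum>j\<in>{2..n}. 1)"
    unfolding unvisited_def by (intro sum_mono) auto
  moreover have "0 \<le> unvisited n js"
    unfolding unvisited_def by (intro sum_nonneg) auto
  ultimately show ?thesis by simp
qed

lemma word_exp_unvisited:
  assumes "1 \<le> n"
  shows "word_exp n t (unvisited n) = real (n - 1) * exp (- t / real n)"
proof -
  have "word_exp n t (unvisited n) = (\<Sum>j\<in>{2..n}. word_exp n t (\<lambda>js. of_bool (set js \<inter> {j} = {})))"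
    unfolding unvisited_def using assms by (intro word_exp_sum[where B = 1]) auto
  also have "\<dots> = (\<Sum>j\<in>{2..n}. exp (- t / real n))"
  proof (intro sum.cong refl)
    fix j assume "j \<in> {2..n}"
    then show "word_exp n t (\<lambda>js. of_bool (set js \<inter> {j} = {})) = exp (- t / real n)"
      using assms word_exp_avoid[of n "{j}" t] by simp
  qed
  finally show ?thesis by simp
qed

(* Second moment of the unvisited count, from avoidance of pairs of letters. *)
lemma word_exp_unvisited_sq:
  assumes "2 \<le> n"
  shows "word_exp n t (\<lambda>js. unvisited n js ^ 2)
       = real (n - 1) * exp (- t / real n) + real (n - 1) * real (n - 2) * exp (- 2 * t / real n)"
proof -
  let ?P = "{2..n} \<times> {2..n}"
  have sq: "unvisited n js ^ 2 = (\<Sum>p\<in>?P. of_bool (set js \<inter> {fst p, snd p} = {}))" for js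
    unfolding unvisited_def power2_eq_square sum_product sum.cartesian_product
    by (intro sum.cong refl) auto
  have "word_exp n t (\<lambda>js. unvisited n js ^ 2)
      = (\<Sum>p\<in>?P. word_exp n t (\<lambda>js. of_bool (set js \<inter> {fst p, snd p} = {})))"
    unfolding sq using assms by (intro word_exp_sum[where B = 1]) auto
  also have "\<dots> = (\<Sum>p\<in>?P. exp (- t * real (card {fst p, snd p}) / real n))"
    using assms by (intro sum.cong refl word_exp_avoid) auto
  also have "\<dots> = (\<Sum>i\<in>{2..n}. \<Sum>j\<in>{2..n}. exp (- t * real (card {i, j}) / real n))"
    by (simp add: sum.cartesian_product case_prod_beta)
  also have "\<dots> = (\<Sum>i\<in>{2..n}. exp (- t / real n) + real (n - 2) * exp (- 2 * t / real n))"
  proof (intro sum.cong refl)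
    fix i assume i: "i \<in> {2..n}"
    have "(\<Sum>j\<in>{2..n}. exp (- t * real (card {i, j}) / real n))
        = exp (- t / real n) + (\<Sum>j\<in>{2..n} - {i}. exp (- t * real (card {i, j}) / real n))"
      using i by (simp add: sum.remove)
    also have "(\<Sum>j\<in>{2..n} - {i}. exp (- t * real (card {i, j}) / real n))
             = (\<Sum>j\<in>{2..n} - {i}. exp (- 2 * t / real n))"
      by (intro sum.cong refl) auto
    finally show "(\<Sum>j\<in>{2..n}. exp (- t * real (card {i, j}) / real n))
        = exp (- t / real n) + real (n - 2) * exp (- 2 * t / real n)"
      using i by (simp add: card_Diff_singleton)
  qed
  also have "\<dots> = real (n - 1) * exp (- t / real n) + real (n - 1) * real (n - 2) * exp (- 2 * t / real n)"
    using assms by (simp add: sum.distrib algebra_simps)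
  finally show ?thesis .
qed

lemma heat_mass_many_fixed_points:
  assumes "2 \<le> n" "0 \<le> t" and \<mu>: "\<mu> = real (n - 1) * exp (- t / real n)"
  shows "1 - 4 / \<mu> \<le> (\<Sum>x\<in>{\<sigma>\<in>Sym n. \<mu> / 2 \<le> fixed_points n \<sigma>}. heat n (ttr n) t x)"
proof -
  define A where "A = {\<sigma>\<in>Sym n. \<mu> / 2 \<le> fixed_points n \<sigma>}"
  have n: "1 \<le> n" using assms(1) by simp
  have pos: "0 < \<mu>" using assms(1) by (simp add: \<mu>)
  have "word_exp n t (\<lambda>js. unvisited n js ^ 2) \<le> \<mu> + \<mu>\<^sup>2"
  proof -
    have "exp (- 2 * t / real n) = exp (- t / real n) ^ 2"
      using exp_double[of "- t / real n"] by simp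
    moreover have "real (n - 1) * real (n - 2) \<le> real (n - 1) ^ 2"
      by (simp add: power2_eq_square mult_left_mono)
    ultimately have "real (n - 1) * real (n - 2) * exp (- 2 * t / real n) \<le> \<mu>\<^sup>2"
      by (simp add: \<mu> power_mult_distrib mult_right_mono)
    then show ?thesis using assms(1) by (simp add: word_exp_unvisited_sq \<mu>)
  qed
  then have "1 - 4 / \<mu> \<le> word_exp n t (\<lambda>js. of_bool (\<mu> / 2 \<le> unvisited n js))"
    using assms pos unvisited_bound
    by (intro word_exp_chebyshev[where B = n]) (simp_all add: word_exp_unvisited)
  also have "\<dots> \<le> word_exp n t (\<lambda>js. of_bool (word_prod js \<in> A))"
  proof (rule word_exp_mono[where B = 1 and C = 1])
    fix js :: "nat list" assume "set js \<subseteq> {1..n}"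
    then show "of_bool (\<mu> / 2 \<le> unvisited n js) \<le> (of_bool (word_prod js \<in> A) :: real)"
      using word_prod_in_Sym unvisited_le_fixed_points[of n js] by (auto simp: A_def)
  qed (use assms(2) n in auto)
  also have "\<dots> = (\<Sum>x\<in>A. heat n (ttr n) t x)"
    using n by (simp add: heat_mass A_def)
  finally show ?thesis unfolding A_def .
qed

lemma card_Sym: "card (Sym n) = fact n"
  unfolding Sym_def by (rule card_permutations) auto

lemma unif_mass: "A \<subseteq> Sym n \<Longrightarrow> (\<Sum>x\<in>A. unif n x) = real (card A) / fact n"
  by (simp add: unif_def card_Sym subset_iff)

lemma card_Sym_fixing:
  assumes "j \<in> {1..n}"
  shows "card {\<sigma>\<in>Sym n. \<sigma> j = j} = fact (n - 1)"
proof -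
  have "{\<sigma>\<in>Sym n. \<sigma> j = j} = {\<sigma>. \<sigma> permutes ({1..n} - {j})}"
    by (auto simp: Sym_def permutes_def)
  moreover have "card ({1..n} - {j}) = n - 1" using assms by simp
  ultimately show ?thesis by (simp add: card_permutations)
qed

lemma sum_fixed_points: "(\<Sum>\<sigma>\<in>Sym n. fixed_points n \<sigma>) = real (n - 1) * fact (n - 1)"
proof -
  have "(\<Sum>\<sigma>\<in>Sym n. fixed_points n \<sigma>) = (\<Sum>j\<in>{2..n}. \<Sum>\<sigma>\<in>Sym n. of_bool (\<sigma> j = j))"
    unfolding fixed_points_def by (rule sum.swap)
  also have "\<dots> = (\<Sum>j\<in>{2..n}. fact (n - 1))"
  proof (intro sum.cong refl)
    fix j :: nat assume "j \<in> {2..n}"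
    then have "card (Sym n \<inter> {\<sigma>. \<sigma> j = j}) = fact (n - 1)"
      using card_Sym_fixing[of j n] by (simp add: Int_def conj_commute)
    then show "(\<Sum>\<sigma>\<in>Sym n. of_bool (\<sigma> j = j)) = (fact (n - 1) :: real)"
      by simp
  qed
  finally show ?thesis by simp
qed

(* Markov's inequality: the uniform measure gives mass at most 2/mu to the same set. *)
lemma unif_mass_many_fixed_points:
  assumes "1 \<le> n" "0 < \<mu>"
  shows "(\<Sum>x\<in>{\<sigma>\<in>Sym n. \<mu> / 2 \<le> fixed_points n \<sigma>}. unif n x) \<le> 2 / \<mu>"
proof -
  define A where "A = {\<sigma>\<in>Sym n. \<mu> / 2 \<le> fixed_points n \<sigma>}"
  have "\<mu> / 2 * real (card A) \<le> (\<Sum>\<sigma>\<in>A. fixed_points n \<sigma>)"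
    using sum_mono[of A "\<lambda>_. \<mu> / 2" "fixed_points n"] by (simp add: A_def mult.commute)
  also have "\<dots> \<le> (\<Sum>\<sigma>\<in>Sym n. fixed_points n \<sigma>)"
    by (intro sum_mono2) (auto simp: A_def fixed_points_def intro: sum_nonneg)
  also have "\<dots> \<le> real n * fact (n - 1)"
    unfolding sum_fixed_points by (intro mult_right_mono) auto
  also have "\<dots> = fact n"
    using assms(1) by (simp add: fact_reduce[of n])
  finally have "real (card A) / fact n \<le> 2 / \<mu>"
    using assms(2) by (simp add: field_simps)
  moreover have "A \<subseteq> Sym n" by (simp add: A_def)
  ultimately show ?thesis unfolding A_def[symmetric] by (simp add: unif_mass)
qed

lemma tv_lower_bound:
  assumes "B \<subseteq> Sym n"
  shows "(\<Sum>x\<in>B. p x) - (\<Sum>x\<in>B. unif n x) \<le> tv n p (unif n)"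
  unfolding tv_def using assms by (intro cSUP_upper bdd_above_finite) auto

lemma tv_heat_le_1:
  assumes "1 \<le> n" "0 \<le> t"
  shows "tv n (heat n (ttr n) t) (unif n) \<le> 1"
  unfolding tv_def
proof (rule cSUP_least)
  fix B assume "B \<in> Pow (Sym n)"
  then have fin: "finite B" by (meson PowD finite_Sym finite_subset)
  have "(\<Sum>x\<in>B. heat n (ttr n) t x) = word_exp n t (\<lambda>js. of_bool (word_prod js \<in> B))"
    using assms fin by (simp add: heat_mass)
  also have "\<dots> \<le> word_exp n t (\<lambda>_. 1)"
    using assms by (intro word_exp_mono[where B = 1 and C = 1]) auto
  finally have "(\<Sum>x\<in>B. heat n (ttr n) t x) \<le> 1"
    using assms by (simp add: word_exp_const)
  moreover have "0 \<le> (\<Sum>x\<in>B. unif n x)"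
    by (intro sum_nonneg) (simp add: unif_def)
  ultimately show "(\<Sum>x\<in>B. heat n (ttr n) t x) - (\<Sum>x\<in>B. unif n x) \<le> 1"
    by simp
qed auto

(* Cauchy-Schwarz: an event B with u(B) small but p(B) - u(B) large forces d2 to be
   large, since (p(B) - u(B))^2 <= d2^2 u(B). *)
lemma d2_lower_bound:
  assumes "B \<subseteq> Sym n"
  shows "((\<Sum>x\<in>B. p x) - (\<Sum>x\<in>B. unif n x))\<^sup>2 \<le> (d2 n p (unif n))\<^sup>2 * (\<Sum>x\<in>B. unif n x)"
proof -
  have "((\<Sum>x\<in>B. p x) - (\<Sum>x\<in>B. unif n x))\<^sup>2 \<le> (\<Sum>x\<in>B. (p x - unif n x)\<^sup>2) * real (card B)"
    unfolding sum_subtractf[symmetric] by (rule sum_squared_le_sum_of_squares)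
  also have "\<dots> \<le> (\<Sum>x\<in>Sym n. \<bar>p x - unif n x\<bar> ^ 2) * real (card B)"
    unfolding power2_abs using assms by (intro mult_right_mono sum_mono2) auto
  also have "\<dots> = (d2 n p (unif n))\<^sup>2 * (\<Sum>x\<in>B. unif n x)"
  proof -
    have "0 \<le> fact n * (\<Sum>x\<in>Sym n. (p x - unif n x)\<^sup>2)"
      by (simp add: sum_nonneg)
    then show ?thesis
      unfolding d2_def unif_mass[OF assms] card_Sym power2_abs by (simp add: real_sqrt_pow2)
  qed
  finally show ?thesis .
qed

lemma heat_far_from_uniform:
  assumes "2 \<le> n" "0 \<le> t" "12 \<le> \<mu>" and \<mu>: "\<mu> = real (n - 1) * exp (- t / real n)"
  shows "1 - 6 / \<mu> \<le> tv n (heat n (ttr n) t) (unif n)"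
    and "sqrt (\<mu> / 8) \<le> d2 n (heat n (ttr n) t) (unif n)"
proof -
  define A where "A = {\<sigma>\<in>Sym n. \<mu> / 2 \<le> fixed_points n \<sigma>}"
  define D where "D = (\<Sum>x\<in>A. heat n (ttr n) t x) - (\<Sum>x\<in>A. unif n x)"
  have A: "A \<subseteq> Sym n" by (auto simp: A_def)
  have unif_small: "(\<Sum>x\<in>A. unif n x) \<le> 2 / \<mu>"
    unfolding A_def using assms by (intro unif_mass_many_fixed_points) auto
  moreover have "1 - 4 / \<mu> \<le> (\<Sum>x\<in>A. heat n (ttr n) t x)"
    unfolding A_def using assms by (intro heat_mass_many_fixed_points)
  ultimately have D_large: "1 - 6 / \<mu> \<le> D" by (simp add: D_def)
  then show "1 - 6 / \<mu> \<le> tv n (heat n (ttr n) t) (unif n)"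
    using tv_lower_bound[OF A, of "heat n (ttr n) t"] unfolding D_def by linarith
  have "6 / \<mu> \<le> 1 / 2" using assms(3) by (simp add: field_simps)
  then have "1 / 2 \<le> D" using D_large by linarith
  then have "(1 / 2)\<^sup>2 \<le> D\<^sup>2" by (intro power_mono) auto
  also have "\<dots> \<le> (d2 n (heat n (ttr n) t) (unif n))\<^sup>2 * (\<Sum>x\<in>A. unif n x)"
    unfolding D_def by (rule d2_lower_bound[OF A])
  also have "\<dots> \<le> (d2 n (heat n (ttr n) t) (unif n))\<^sup>2 * (2 / \<mu>)"
    by (intro mult_left_mono unif_small) simp
  finally have "\<mu> / 8 \<le> (d2 n (heat n (ttr n) t) (unif n))\<^sup>2"
    using assms(3) by (simp add: field_simps)
  then have "sqrt (\<mu> / 8) \<le> \<bar>d2 n (heat n (ttr n) t) (unif n)\<bar>"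
    using real_sqrt_le_mono real_sqrt_abs by metis
  moreover have "0 \<le> d2 n (heat n (ttr n) t) (unif n)"
    unfolding d2_def by (simp add: sum_nonneg)
  ultimately show "sqrt (\<mu> / 8) \<le> d2 n (heat n (ttr n) t) (unif n)"
    by simp
qed

lemma mixing_parameter_to_infinity:
  fixes k :: "nat \<Rightarrow> real"
  assumes "filterlim (\<lambda>n. (k n - real n * ln (real n)) / real n) at_bot sequentially"
  shows "filterlim (\<lambda>n. real (n - 1) * exp (- k n / real n)) at_top sequentially"
proof (rule filterlim_at_top_mono)
  let ?z = "\<lambda>n. (k n - real n * ln (real n)) / real n"
  have "filterlim (\<lambda>n. exp (- ?z n)) at_top sequentially"
    by (rule filterlim_compose[OF exp_at_top filterlim_compose[OF filterlim_uminus_at_top_at_bot assms]])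
  then show "filterlim (\<lambda>n. 1 / 2 * exp (- ?z n)) at_top sequentially"
    by (intro filterlim_tendsto_pos_mult_at_top[OF tendsto_const]) simp
  show "eventually (\<lambda>n. 1 / 2 * exp (- ?z n) \<le> real (n - 1) * exp (- k n / real n)) sequentially"
    using eventually_ge_at_top[of 2]
  proof eventually_elim
    case (elim n)
    then have "- ?z n = ln (real n) + (- k n / real n)"
      by (simp add: field_simps)
    then have "exp (- ?z n) = exp (ln (real n)) * exp (- k n / real n)"
      by (simp only: exp_add)
    then have "exp (- ?z n) = real n * exp (- k n / real n)"
      using elim by simp
    moreover have "1 / 2 * real n \<le> real (n - 1)" using elim by (simp add: of_nat_diff)
    ultimately show ?case by (simp add: mult_right_mono)
  qed
qed

theorem corollary3p3:
  fixes k :: "nat \<Rightarrow> real"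
  assumes "\<And>n. k n \<ge> 0"
    and "filterlim (\<lambda>n. (k n - real n * ln (real n)) / real n) at_bot sequentially"
  shows "filterlim (\<lambda>n. d2 n (heat n (ttr n) (k n)) (unif n)) at_top sequentially
       \<and> (\<lambda>n. tv n (heat n (ttr n) (k n)) (unif n)) \<longlonglongrightarrow> 1"
proof
  define \<mu> where "\<mu> n = real (n - 1) * exp (- k n / real n)" for n
  have \<mu>_top: "filterlim \<mu> at_top sequentially"
    unfolding \<mu>_def using assms(2) by (rule mixing_parameter_to_infinity)
  have "eventually (\<lambda>n. 2 \<le> n \<and> 12 \<le> \<mu> n) sequentially"
    using eventually_ge_at_top[of 2] \<mu>_top[unfolded filterlim_at_top, rule_format, of 12]
    by eventually_elim auto
  then have bounds: "eventually (\<lambda>n. 1 - 6 / \<mu> n \<le> tv n (heat n (ttr n) (k n)) (unif n)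
                        \<and> sqrt (\<mu> n / 8) \<le> d2 n (heat n (ttr n) (k n)) (unif n)) sequentially"
    by eventually_elim (use heat_far_from_uniform[OF _ assms(1) _ \<mu>_def] in blast)
  have "filterlim (\<lambda>n. 1 / 8 * \<mu> n) at_top sequentially"
    by (rule filterlim_tendsto_pos_mult_at_top[OF tendsto_const _ \<mu>_top]) simp
  then have "filterlim (\<lambda>n. sqrt (\<mu> n / 8)) at_top sequentially"
    by (intro filterlim_compose[OF sqrt_at_top]) simp
  then show "filterlim (\<lambda>n. d2 n (heat n (ttr n) (k n)) (unif n)) at_top sequentially"
    by (rule filterlim_at_top_mono) (use bounds in \<open>auto elim: eventually_mono\<close>)
  show "(\<lambda>n. tv n (heat n (ttr n) (k n)) (unif n)) \<longlonglongrightarrow> 1"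
  proof (rule tendsto_sandwich)
    show "eventually (\<lambda>n. 1 - 6 / \<mu> n \<le> tv n (heat n (ttr n) (k n)) (unif n)) sequentially"
      using bounds by (auto elim: eventually_mono)
    show "eventually (\<lambda>n. tv n (heat n (ttr n) (k n)) (unif n) \<le> 1) sequentially"
      using eventually_ge_at_top[of 1] by eventually_elim (rule tv_heat_le_1[OF _ assms(1)])
    have "(\<lambda>n. 1 - 6 * inverse (\<mu> n)) \<longlonglongrightarrow> 1 - 6 * 0"
      by (intro tendsto_intros tendsto_inverse_0_at_top \<mu>_top)
    then show "(\<lambda>n. 1 - 6 / \<mu> n) \<longlonglongrightarrow> 1"
      by (simp add: divide_inverse)
  qed simp
qed

end
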